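(* Assume $d'=1$ and $t\ge2$, and let $n,j\in[t]$ with $n\neq j$. For each $k_3\in[d]$ define the slice $M^{(k_3)}_{n,j}=\big(\tilde T_{(k_1,n),(k_2,n),(k_3,j)}\big)_{k_1,k_2\in[d]}$ where $\tilde T_{(k_1,n),(k_2,n),(k_3,j)}=y_{n,j}(\{k_1,k_2\},k_3)$. Then: (1) on the image of $\mu$, for fixed $j$ and $k_3$, $M^{(k_3)}_{n,j}=M^{(k_3)}_{n',j}$ for all $n,n'\ne j$; (2) on the image of $\mu$, every matrix $M(\lambda)=\sum_{k=1}^d\lambda_kM^{(k)}_{n,j}$, $\lambda\in\mathbb R^d$, has rank at most $2$; (3) for any row set $R=\{r_1,r_2,r_3\}\subseteq[d]$, column set $C=\{c_1,c_2,c_3\}\subseteq[d]$ and multiset $S\in\operatorname{Mult}_3([d])$, the cubic polynomial \[ \Delta^S_{R,C}=\sum_{(t_1,t_2,t_3)\in\operatorname{Perm}(S)}\det\big(\tilde T_{(r_p,n),(c_q,n),(t_p,j)}\big)_{p,q=1}^3 \] vanishes on the attention variety. (These are the coefficients of $\lambda_{s_1}\lambda_{s_2}\lambda_{s_3}$ in the $(R,C)$ $3\times3$ minor of $M(\lambda)$, indexed by $\binom d3^2\binom{d+2}3$ triples $(R,C,S)$.)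
   Context: Setup: $Q,K\in\mathbb R^{a\times d}$, $V\in\mathbb R^{1\times d}$, $A=K^\top Q$, $\varphi_W(X)=VX(X^\top AX)$ for $X=(x_{kn})\in\mathbb R^{d\times t}$. For $\mathcal A$ a size-2 multiset on $[d]$, $b\in[d]$, $n\ne j$: $c_{n,j}(\mathcal A,b)$ is the coefficient of $(\prod_{u\in\mathcal A}x_{un})x_{bj}$ in $\varphi_W(X)[1,j]$, and $y_{n,j}(\mathcal A,b)=c_{n,j}(\mathcal A,b)/|\operatorname{Perm}(\mathcal A)|$ with $\operatorname{Perm}$ the set of distinct orderings of a multiset. $\mu$ maps $W=(Q,K,V)$ to the array of all scaled coefficients (ambient coordinates carry the same names); the attention variety is the Zariski closure of $\operatorname{im}\mu$. $\operatorname{Mult}_3([d])$ is the set of size-3 multisets on $[d]$. *)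

theory Defs
  imports "Jordan_Normal_Form.DL_Rank" "HOL-Library.Poly_Mapping"
    "HOL-Combinatorics.Multiset_Permutations"
begin

(* Conventions: [d] = {0..<d}, [t] = {0..<t}, [a] = {0..<a} (0-based relabelling).
   d' = 1: V is a 1 x d row, represented as V :: nat => real (V k = V[1,k]).
   Q, K :: nat => nat => real with Q i k = Q[i,k], i in [a], k in [d]. *)

type_synonym monom = "(nat \<times> nat) \<Rightarrow>\<^sub>0 nat"
type_synonym rpoly = "monom \<Rightarrow>\<^sub>0 real"

(* the polynomial variable x_{k m} (entry of X in row k, column m) *)
definition xvar :: "nat \<Rightarrow> nat \<Rightarrow> rpoly" where
  "xvar k m = Poly_Mapping.single (Poly_Mapping.single (k, m) 1) 1"

definition pconst :: "real \<Rightarrow> rpoly" where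
  "pconst c = Poly_Mapping.single 0 c"

definition Amat :: "nat \<Rightarrow> (nat \<Rightarrow> nat \<Rightarrow> real) \<Rightarrow> (nat \<Rightarrow> nat \<Rightarrow> real) \<Rightarrow> nat \<Rightarrow> nat \<Rightarrow> real" where
  "Amat a Q K p q = (\<Sum>i<a. K i p * Q i q)"

(* phi_W(X)[1,j] = sum_m (V X)[1,m] * (X^T A X)[m,j], as a polynomial in the entries of X *)
definition phi_poly :: "nat \<Rightarrow> nat \<Rightarrow> nat \<Rightarrow> (nat \<Rightarrow> nat \<Rightarrow> real) \<Rightarrow> (nat \<Rightarrow> nat \<Rightarrow> real)
    \<Rightarrow> (nat \<Rightarrow> real) \<Rightarrow> nat \<Rightarrow> rpoly" where
  "phi_poly a d t Q K V j =
     (\<Sum>m<t. (\<Sum>k<d. pconst (V k) * xvar k m) *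
             (\<Sum>p<d. \<Sum>q<d. xvar p m * pconst (Amat a Q K p q) * xvar q j))"

definition coef_monom :: "nat multiset \<Rightarrow> nat \<Rightarrow> nat \<Rightarrow> nat \<Rightarrow> monom" where
  "coef_monom A b n j =
     sum_mset (image_mset (\<lambda>u. Poly_Mapping.single (u, n) 1) A) + Poly_Mapping.single (b, j) 1"

definition cnj :: "nat \<Rightarrow> nat \<Rightarrow> nat \<Rightarrow> (nat \<Rightarrow> nat \<Rightarrow> real) \<Rightarrow> (nat \<Rightarrow> nat \<Rightarrow> real)
    \<Rightarrow> (nat \<Rightarrow> real) \<Rightarrow> nat \<Rightarrow> nat \<Rightarrow> nat multiset \<Rightarrow> nat \<Rightarrow> real" where
  "cnj a d t Q K V n j A b = Poly_Mapping.lookup (phi_poly a d t Q K V j) (coef_monom A b n j)"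

definition ynj :: "nat \<Rightarrow> nat \<Rightarrow> nat \<Rightarrow> (nat \<Rightarrow> nat \<Rightarrow> real) \<Rightarrow> (nat \<Rightarrow> nat \<Rightarrow> real)
    \<Rightarrow> (nat \<Rightarrow> real) \<Rightarrow> nat \<Rightarrow> nat \<Rightarrow> nat multiset \<Rightarrow> nat \<Rightarrow> real" where
  "ynj a d t Q K V n j A b =
     cnj a d t Q K V n j A b / real (card (permutations_of_multiset A))"

type_synonym coord = "nat \<times> nat \<times> nat multiset \<times> nat"

definition valid_coord :: "nat \<Rightarrow> nat \<Rightarrow> coord \<Rightarrow> bool" where
  "valid_coord d t c = (case c of (n, j, A, b) \<Rightarrow>
      n < t \<and> j < t \<and> n \<noteq> j \<and> size A = 2 \<and> set_mset A \<subseteq> {..<d} \<and> b < d)"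

definition mu :: "nat \<Rightarrow> nat \<Rightarrow> nat \<Rightarrow>
    (nat \<Rightarrow> nat \<Rightarrow> real) \<times> (nat \<Rightarrow> nat \<Rightarrow> real) \<times> (nat \<Rightarrow> real) \<Rightarrow> coord \<Rightarrow> real" where
  "mu a d t W c = (case W of (Q, K, V) \<Rightarrow> case c of (n, j, A, b) \<Rightarrow>
      if valid_coord d t c then ynj a d t Q K V n j A b else 0)"

inductive_set polyfun :: "((coord \<Rightarrow> real) \<Rightarrow> real) set" where
  pf_const: "(\<lambda>x. c) \<in> polyfun"
| pf_var: "(\<lambda>x. x i) \<in> polyfun"
| pf_add: "f \<in> polyfun \<Longrightarrow> g \<in> polyfun \<Longrightarrow> (\<lambda>x. f x + g x) \<in> polyfun"
| pf_mult: "f \<in> polyfun \<Longrightarrow> g \<in> polyfun \<Longrightarrow> (\<lambda>x. f x * g x) \<in> polyfun"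

definition zariski_closure :: "(coord \<Rightarrow> real) set \<Rightarrow> (coord \<Rightarrow> real) set" where
  "zariski_closure S = {x. \<forall>f\<in>polyfun. (\<forall>y\<in>S. f y = 0) \<longrightarrow> f x = 0}"

definition attention_variety :: "nat \<Rightarrow> nat \<Rightarrow> nat \<Rightarrow> (coord \<Rightarrow> real) set" where
  "attention_variety a d t = zariski_closure (range (mu a d t))"

definition Tt :: "(coord \<Rightarrow> real) \<Rightarrow> nat \<Rightarrow> nat \<Rightarrow> nat \<Rightarrow> nat \<Rightarrow> nat \<Rightarrow> real" where
  "Tt x n j k1 k2 k3 = x (n, j, {#k1, k2#}, k3)"

definition Mslice :: "nat \<Rightarrow> (coord \<Rightarrow> real) \<Rightarrow> nat \<Rightarrow> nat \<Rightarrow> nat \<Rightarrow> real mat" where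
  "Mslice d x n j k3 = mat d d (\<lambda>(k1, k2). Tt x n j k1 k2 k3)"

definition Mlam :: "nat \<Rightarrow> (coord \<Rightarrow> real) \<Rightarrow> nat \<Rightarrow> nat \<Rightarrow> (nat \<Rightarrow> real) \<Rightarrow> real mat" where
  "Mlam d x n j lam = mat d d (\<lambda>(k1, k2). \<Sum>k<d. lam k * Mslice d x n j k $$ (k1, k2))"

end

theory Submission
  imports Defs
begin

text \<open>
  On the image of \<mu>, the coordinate T~((k1,n),(k2,n),(k3,j)) equals
  (V k1 A k2 k3 + V k2 A k1 k3) / 2, which does not depend on n. Hence
  M(\<lambda>) = (V w^T + w V^T) / 2 with w = A \<lambda> is a sum of two rank-one matrices.
  In the cubic \<Delta>, the p-th row of each determinant has the form u_p b(t_p) + e_p(t_p) v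
  with v fixed: expanding multilinearly, terms with two rows proportional to v vanish and
  every other term is alternating in two of the t_p, so the sum over all orderings of S
  cancels.
\<close>

lemma mset_doubleton_eq_iff: "{#k, p#} = {#k1, k2#} \<longleftrightarrow> k = k1 \<and> p = k2 \<or> k = k2 \<and> p = k1"
  by (metis add_eq_conv_ex add_mset_eq_single)

lemma multiset_size_3_cases:
  assumes "size S = 3"
  obtains (all_equal) x where "S = {#x, x, x#}"
    | (two_equal) u v where "u \<noteq> v" "S = {#u, u, v#}"
    | (distinct) x y z where "distinct [x, y, z]" "S = {#x, y, z#}"
proof -
  obtain xs where xs: "mset xs = S"
    using ex_mset by blast
  with assms have "length xs = 3"
    by auto
  then obtain x y z where "xs = [x, y, z]"
    by (auto simp: numeral_3_eq_3 length_Suc_conv)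
  with xs have S: "S = {#x, y, z#}"
    by simp
  consider "x = y" "y = z" | u v where "u \<noteq> v" "S = {#u, u, v#}" | "distinct [x, y, z]"
    unfolding S by (metis add_mset_commute distinct_length_2_or_more distinct_singleton)
  then show ?thesis
    using S that by metis
qed

lemma permutations_of_multiset_size_3:
  "permutations_of_multiset {#x, y, z#} = {[x,y,z], [x,z,y], [y,x,z], [y,z,x], [z,x,y], [z,y,x]}"
proof -
  have remove: "{#x, y, z#} - {#x#} = {#y, z#}" "{#x, y, z#} - {#y#} = {#x, z#}"
    "{#x, y, z#} - {#z#} = {#x, y#}"
    by (simp, simp add: add_mset_commute, simp add: add_mset_commute)
  have "permutations_of_multiset {#x, y, z#} =
      (\<Union>u\<in>{x, y, z}. (#) u ` permutations_of_multiset ({#x, y, z#} - {#u#}))"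
    by (subst permutations_of_multiset_nonempty) auto
  also have "\<dots> = (#) x ` permutations_of_multiset ({#x, y, z#} - {#x#})
      \<union> (#) y ` permutations_of_multiset ({#x, y, z#} - {#y#})
      \<union> (#) z ` permutations_of_multiset ({#x, y, z#} - {#z#})"
    by blast
  also have "\<dots> = {[x,y,z], [x,z,y], [y,x,z], [y,z,x], [z,x,y], [z,y,x]}"
    unfolding remove permutations_of_multiset_doubleton by auto
  finally show ?thesis .
qed

lemma sum_permutations_of_multiset_size_3_eq_0:
  fixes g :: "'a list \<Rightarrow> 'b::{idom, ring_char_0}"
  assumes sym: "\<And>x y z. g [x,y,z] + g [x,z,y] + g [y,x,z] + g [y,z,x] + g [z,x,y] + g [z,y,x] = 0"
    and "size S = 3"
  shows "(\<Sum>ts\<in>permutations_of_multiset S. g ts) = 0"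
  using \<open>size S = 3\<close>
proof (cases rule: multiset_size_3_cases)
  case (all_equal x)
  have "6 * g [x, x, x] = 0"
    using sym[of x x x] by simp
  then show ?thesis
    using all_equal by (simp add: permutations_of_multiset_size_3)
next
  case (two_equal u v)
  have perms: "permutations_of_multiset S = {[u,u,v], [u,v,u], [v,u,u]}"
    using two_equal by (auto simp: permutations_of_multiset_size_3)
  have "2 * (g [u,u,v] + g [u,v,u] + g [v,u,u]) = 0"
    using sym[of u u v] by (simp add: algebra_simps)
  then have "g [u,u,v] + g [u,v,u] + g [v,u,u] = 0"
    by (simp only: mult_eq_0_iff) simp
  with perms two_equal show ?thesis
    by (simp add: add.assoc)
next
  case (distinct x y z)
  then show ?thesis
    using sym[of x y z] by (simp add: permutations_of_multiset_size_3 add.assoc)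
qed

lemma if_conj_else_0: "(if P \<and> Q then x else 0) = (if P then if Q then x else 0 else 0)"
  by simp

lemma sum_if_const_cond: "(\<Sum>x\<in>S. if P then f x else 0) = (if P then sum f S else 0)"
  by simp

lemma sum_square_indicator:
  fixes d :: nat
  assumes "D \<subseteq> {..<d} \<times> {..<d}"
  shows "(\<Sum>p<d. \<Sum>k<d. if (k, p) \<in> D then g k p else 0) = (\<Sum>(k, p)\<in>D. g k p)"
proof -
  have "(\<Sum>p<d. \<Sum>k<d. if (k, p) \<in> D then g k p else 0) =
      (\<Sum>(k, p)\<in>{..<d} \<times> {..<d}. if (k, p) \<in> D then g k p else 0)"
    by (subst sum.swap) (simp add: sum.cartesian_product)
  also have "\<dots> = (\<Sum>(k, p)\<in>{..<d} \<times> {..<d} \<inter> D. g k p)"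
    by (subst sum.inter_restrict) (auto intro!: sum.cong)
  also have "{..<d} \<times> {..<d} \<inter> D = D"
    using assms by blast
  finally show ?thesis .
qed

lemma det_mat_0: "det (mat 0 0 f) = 1"
  by (simp add: det_def)

lemma det_mat_Suc:
  fixes f :: "nat \<times> nat \<Rightarrow> 'a::comm_ring_1"
  shows "det (mat (Suc n) (Suc n) f) = (\<Sum>i<Suc n. f (i, 0) * ((-1) ^ i *
           det (mat n n (\<lambda>(i', j'). f (if i' < i then i' else Suc i', Suc j')))))"
proof -
  have "det (mat (Suc n) (Suc n) f) =
      (\<Sum>i<Suc n. mat (Suc n) (Suc n) f $$ (i, 0) * cofactor (mat (Suc n) (Suc n) f) i 0)"
    by (rule laplace_expansion_column) auto
  also have "\<dots> = (\<Sum>i<Suc n. f (i, 0) * ((-1) ^ i *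
           det (mat n n (\<lambda>(i', j'). f (if i' < i then i' else Suc i', Suc j')))))"
    by (intro sum.cong refl) (simp add: cofactor_def mat_delete_def,
        intro arg_cong[where f = "\<lambda>x. _ * (_ * x)"] arg_cong[where f = det] eq_matI, auto)
  finally show ?thesis .
qed

lemma det_mat_3:
  fixes f :: "nat \<times> nat \<Rightarrow> 'a::comm_ring_1"
  shows "det (mat 3 3 f) =
      f (0,0) * (f (1,1) * f (2,2) - f (2,1) * f (1,2))
    - f (1,0) * (f (0,1) * f (2,2) - f (2,1) * f (0,2))
    + f (2,0) * (f (0,1) * f (1,2) - f (1,1) * f (0,2))"
  by (simp add: numeral_3_eq_3 numeral_2_eq_2 det_mat_Suc det_mat_0 algebra_simps)

lemma det_symmetrization_eq_0:
  fixes u v :: "nat \<Rightarrow> 'a::comm_ring_1" and b e :: "nat \<Rightarrow> 'b \<Rightarrow> 'a"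
  defines "D ts \<equiv> det (mat 3 3 (\<lambda>(p, q). u p * b q (ts ! p) + v q * e p (ts ! p)))"
  shows "D [x,y,z] + D [x,z,y] + D [y,x,z] + D [y,z,x] + D [z,x,y] + D [z,y,x] = 0"
  unfolding D_def det_mat_3 by (simp add: algebra_simps)

lemma (in vec_space) rank_mat_sum_two_products_le_2:
  "rank (mat n nc (\<lambda>(i, k). f i * g k + f' i * g' k)) \<le> 2"
proof -
  define A where "A = mat n nc (\<lambda>(i, k). f i * g k)"
  define B where "B = mat n nc (\<lambda>(i, k). f' i * g' k)"
  have carrier: "A \<in> carrier_mat n nc" "B \<in> carrier_mat n nc"
    by (simp_all add: A_def B_def)
  have "mat n nc (\<lambda>(i, k). f i * g k + f' i * g' k) = A + B"
    by (rule eq_matI) (simp_all add: A_def B_def)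
  moreover have "rank A \<le> 1" "rank B \<le> 1"
    by (rule rank_le_1_product_entries[OF carrier(1)], simp add: A_def,
        rule rank_le_1_product_entries[OF carrier(2)], simp add: B_def)
  ultimately show ?thesis
    using rank_subadditive[OF carrier] by simp
qed

lemma polyfun_sum:
  "finite S \<Longrightarrow> (\<And>s. s \<in> S \<Longrightarrow> f s \<in> polyfun) \<Longrightarrow> (\<lambda>x. \<Sum>s\<in>S. f s x) \<in> polyfun"
proof (induction S rule: finite_induct)
  case empty
  then show ?case
    using pf_const[of 0] by simp
next
  case (insert s S)
  then show ?case
    using pf_add[of "f s" "\<lambda>x. \<Sum>s\<in>S. f s x"] by simp
qed

lemma polyfun_prod:
  "finite S \<Longrightarrow> (\<And>s. s \<in> S \<Longrightarrow> f s \<in> polyfun) \<Longrightarrow> (\<lambda>x. \<Prod>s\<in>S. f s x) \<in> polyfun"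
proof (induction S rule: finite_induct)
  case empty
  then show ?case
    using pf_const[of 1] by simp
next
  case (insert s S)
  then show ?case
    using pf_mult[of "f s" "\<lambda>x. \<Prod>s\<in>S. f s x"] by simp
qed

lemma polyfun_det:
  assumes "\<And>p q. p < n \<Longrightarrow> q < n \<Longrightarrow> (\<lambda>x. f x (p, q)) \<in> polyfun"
  shows "(\<lambda>x. det (mat n n (f x))) \<in> polyfun"
proof -
  have "det (mat n n (f x)) = (\<Sum>\<pi> | \<pi> permutes {0..<n}. signof \<pi> * (\<Prod>i = 0..<n. f x (i, \<pi> i)))"
    for x
    unfolding det_def by (auto intro!: sum.cong prod.cong simp: permutes_in_image)
  moreover have "(\<lambda>x. \<Sum>\<pi> | \<pi> permutes {0..<n}. signof \<pi> * (\<Prod>i = 0..<n. f x (i, \<pi> i))) \<in> polyfun"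
    by (intro polyfun_sum pf_mult pf_const polyfun_prod assms)
      (auto simp: finite_permutations permutes_in_image)
  ultimately show ?thesis
    by simp
qed

lemma vanishes_on_attention_variety:
  assumes "f \<in> polyfun" "\<And>Q K V. f (mu a d t (Q, K, V)) = 0" "x \<in> attention_variety a d t"
  shows "f x = 0"
proof -
  have "\<forall>y\<in>range (mu a d t). f y = 0"
    using assms(2) by (metis imageE prod_cases3)
  with assms(1,3) show ?thesis
    unfolding attention_variety_def zariski_closure_def by blast
qed

definition monom_of_mset :: "'a multiset \<Rightarrow> 'a \<Rightarrow>\<^sub>0 nat" where
  "monom_of_mset M = (\<Sum>x\<in>#M. Poly_Mapping.single x 1)"

lemma lookup_monom_of_mset: "Poly_Mapping.lookup (monom_of_mset M) = count M"
  by (induction M) (auto simp: monom_of_mset_def lookup_add lookup_single when_def)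

lemma monom_of_mset_eq_iff: "monom_of_mset M = monom_of_mset N \<longleftrightarrow> M = N"
  by (metis count_inject lookup_inject lookup_monom_of_mset)

lemma coef_monom_doubleton:
  "coef_monom {#k1, k2#} k3 n j = monom_of_mset {#(k1, n), (k2, n), (k3, j)#}"
  by (simp add: coef_monom_def monom_of_mset_def add.assoc)

lemma phi_poly_eq_sum_monoms:
  "phi_poly a d t Q K V j = (\<Sum>m<t. \<Sum>p<d. \<Sum>q<d. \<Sum>k<d.
     Poly_Mapping.single (monom_of_mset {#(k, m), (p, m), (q, j)#}) (V k * Amat a Q K p q))"
  by (simp add: phi_poly_def sum_distrib_left sum_distrib_right xvar_def pconst_def mult_single
      mult.assoc monom_of_mset_def)

lemma two_columns_mset_eq_iff:
  assumes "n \<noteq> j"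
  shows "{#(k, m), (p, m), (q, j)#} = {#(k1, n), (k2, n), (k3, j)#} \<longleftrightarrow>
    m = n \<and> q = k3 \<and> (k, p) \<in> {(k1, k2), (k2, k1)}" (is "?L = ?R \<longleftrightarrow> _")
proof
  assume eq: "?L = ?R"
  have "(q, j) \<in># ?R"
    unfolding eq[symmetric] by simp
  with assms have q: "q = k3"
    by auto
  with eq have eq2: "{#(k, m), (p, m)#} = {#(k1, n), (k2, n)#}"
    by (metis add_mset_commute add_mset_remove_trivial)
  then have "(k, m) \<in># {#(k1, n), (k2, n)#}"
    by (metis union_single_eq_member)
  then have m: "m = n"
    by auto
  have "image_mset fst {#(k, m), (p, m)#} = image_mset fst {#(k1, n), (k2, n)#}"
    using eq2 by (rule arg_cong)
  then have "k = k1 \<and> p = k2 \<or> k = k2 \<and> p = k1"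
    by (simp only: image_mset_add_mset image_mset_empty fst_conv mset_doubleton_eq_iff)
  with q m show "m = n \<and> q = k3 \<and> (k, p) \<in> {(k1, k2), (k2, k1)}"
    by blast
next
  assume "m = n \<and> q = k3 \<and> (k, p) \<in> {(k1, k2), (k2, k1)}"
  then have "m = n" "q = k3" "{#k, p#} = {#k1, k2#}"
    unfolding mset_doubleton_eq_iff by blast+
  have "?L = image_mset (\<lambda>u. (u, m)) {#k, p#} + {#(q, j)#}"
    by simp
  also have "\<dots> = image_mset (\<lambda>u. (u, n)) {#k1, k2#} + {#(k3, j)#}"
    by (simp only: \<open>m = n\<close> \<open>q = k3\<close> \<open>{#k, p#} = {#k1, k2#}\<close>)
  also have "\<dots> = ?R"
    by simp
  finally show "?L = ?R" .
qed

lemma cnj_doubleton: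
  assumes "n < t" "n \<noteq> j" "k1 < d" "k2 < d" "k3 < d"
  shows "cnj a d t Q K V n j {#k1, k2#} k3 = (\<Sum>(k, p)\<in>{(k1, k2), (k2, k1)}. V k * Amat a Q K p k3)"
proof -
  let ?P = "{(k1, k2), (k2, k1)}"
  have "cnj a d t Q K V n j {#k1, k2#} k3 = (\<Sum>m<t. \<Sum>p<d. \<Sum>q<d. \<Sum>k<d.
      if m = n \<and> q = k3 \<and> (k, p) \<in> ?P then V k * Amat a Q K p q else 0)"
    unfolding cnj_def phi_poly_eq_sum_monoms coef_monom_doubleton lookup_sum lookup_single when_def
      monom_of_mset_eq_iff two_columns_mset_eq_iff[OF assms(2)] by (rule refl)
  also have "\<dots> = (\<Sum>p<d. \<Sum>k<d. if (k, p) \<in> ?P then V k * Amat a Q K p k3 else 0)"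
    using assms
    by (simp only: if_conj_else_0 sum_if_const_cond sum.delta finite_lessThan lessThan_iff if_True)
  also have "\<dots> = (\<Sum>(k, p)\<in>?P. V k * Amat a Q K p k3)"
    using assms by (intro sum_square_indicator) auto
  finally show ?thesis .
qed

lemma Tt_mu:
  assumes "n < t" "j < t" "n \<noteq> j" "k1 < d" "k2 < d" "k3 < d"
  shows "Tt (mu a d t (Q, K, V)) n j k1 k2 k3 =
    (V k1 * Amat a Q K k2 k3 + V k2 * Amat a Q K k1 k3) / 2"
  using assms
  by (cases "k1 = k2") (simp_all add: Tt_def mu_def valid_coord_def ynj_def cnj_doubleton
      permutations_of_multiset_doubleton)

lemma Mslice_mu:
  assumes "n < t" "j < t" "n \<noteq> j" "k3 < d"
  shows "Mslice d (mu a d t (Q, K, V)) n j k3 =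
    mat d d (\<lambda>(k1, k2). (V k1 * Amat a Q K k2 k3 + V k2 * Amat a Q K k1 k3) / 2)"
  by (rule eq_matI) (simp_all add: Mslice_def Tt_mu assms)

lemma Mlam_mu:
  assumes "n < t" "j < t" "n \<noteq> j"
  shows "\<exists>w. Mlam d (mu a d t (Q, K, V)) n j lam = mat d d (\<lambda>(i, k). V i * w k + w i * V k)"
proof
  let ?w = "\<lambda>i. (\<Sum>l<d. lam l * Amat a Q K i l) / 2"
  show "Mlam d (mu a d t (Q, K, V)) n j lam = mat d d (\<lambda>(i, k). V i * ?w k + ?w i * V k)"
  proof (rule eq_matI)
    fix i k
    assume "i < dim_row (mat d d (\<lambda>(i, k). V i * ?w k + ?w i * V k))"
      "k < dim_col (mat d d (\<lambda>(i, k). V i * ?w k + ?w i * V k))"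
    with assms show "Mlam d (mu a d t (Q, K, V)) n j lam $$ (i, k) =
        mat d d (\<lambda>(i, k). V i * ?w k + ?w i * V k) $$ (i, k)"
      by (simp add: Mlam_def Mslice_def Tt_mu sum_distrib_left sum_distrib_right sum_divide_distrib
          add_divide_distrib sum.distrib algebra_simps)
  qed (simp_all add: Mlam_def)
qed

lemma rank_Mlam_mu_le_2:
  assumes "n < t" "j < t" "n \<noteq> j"
  shows "vec_space.rank d (Mlam d (mu a d t (Q, K, V)) n j lam) \<le> 2"
proof -
  obtain w where "Mlam d (mu a d t (Q, K, V)) n j lam = mat d d (\<lambda>(i, k). V i * w k + w i * V k)"
    using Mlam_mu[OF assms] by blast
  then show ?thesis
    by (simp only:) (rule vec_space.rank_mat_sum_two_products_le_2)
qed

(* The paper's \<Delta>^S_{R,C} with R = {r 0, r 1, r 2} and C = {c 0, c 1, c 2}. *)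
definition Delta :: "(coord \<Rightarrow> real) \<Rightarrow> nat \<Rightarrow> nat \<Rightarrow> (nat \<Rightarrow> nat) \<Rightarrow> (nat \<Rightarrow> nat) \<Rightarrow> nat multiset \<Rightarrow> real"
  where "Delta x n j r c S =
    (\<Sum>ts\<in>permutations_of_multiset S. det (mat 3 3 (\<lambda>(p, q). Tt x n j (r p) (c q) (ts ! p))))"

lemma polyfun_Delta: "(\<lambda>x. Delta x n j r c S) \<in> polyfun"
  unfolding Delta_def
  by (intro polyfun_sum polyfun_det) (simp_all add: Tt_def pf_var finite_permutations_of_multiset)

lemma Delta_mu_eq_0:
  assumes "n < t" "j < t" "n \<noteq> j" "r ` {..<3} \<subseteq> {..<d}" "c ` {..<3} \<subseteq> {..<d}"
    and "size S = 3" "set_mset S \<subseteq> {..<d}"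
  shows "Delta (mu a d t (Q, K, V)) n j r c S = 0"
proof -
  have rc: "r p < d" "c p < d" if "p < 3" for p
    using assms(4,5) that by auto
  let ?D = "\<lambda>ts. det (mat 3 3 (\<lambda>(p, q). V (r p) / 2 * Amat a Q K (c q) (ts ! p)
    + V (c q) / 2 * Amat a Q K (r p) (ts ! p)))"
  have "det (mat 3 3 (\<lambda>(p, q). Tt (mu a d t (Q, K, V)) n j (r p) (c q) (ts ! p))) = ?D ts"
    if "ts \<in> permutations_of_multiset S" for ts
  proof -
    have "mset ts = S"
      using that by (rule permutations_of_multisetD)
    then have "ts ! p < d" if "p < 3" for p
      using that assms(6,7) by (metis in_mono lessThan_iff nth_mem set_mset_mset size_mset)
    with assms(1-3) show ?thesis
      by (intro arg_cong[where f = det] eq_matI) (auto simp: Tt_mu rc field_simps)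
  qed
  then have "Delta (mu a d t (Q, K, V)) n j r c S = (\<Sum>ts\<in>permutations_of_multiset S. ?D ts)"
    unfolding Delta_def by (rule sum.cong[OF refl])
  also have "\<dots> = 0"
    using assms(6)
    by (intro sum_permutations_of_multiset_size_3_eq_0)
      (rule det_symmetrization_eq_0[where u = "\<lambda>p. V (r p) / 2" and b = "\<lambda>q. Amat a Q K (c q)"
          and v = "\<lambda>q. V (c q) / 2" and e = "\<lambda>p. Amat a Q K (r p)"])
  finally show ?thesis .
qed

theorem mainTheorem9:
  fixes a d t n j :: nat
  assumes "t \<ge> 2" and "n < t" and "j < t" and "n \<noteq> j"
  shows
    "(\<forall>W k3 n1 n2. k3 < d \<longrightarrow> n1 < t \<longrightarrow> n2 < t \<longrightarrow> n1 \<noteq> j \<longrightarrow> n2 \<noteq> j \<longrightarrow>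
        Mslice d (mu a d t W) n1 j k3 = Mslice d (mu a d t W) n2 j k3)
   \<and> (\<forall>W (lam :: nat \<Rightarrow> real).
        vec_space.rank d (Mlam d (mu a d t W) n j lam) \<le> 2)
   \<and> (\<forall>(r :: nat \<Rightarrow> nat) (c :: nat \<Rightarrow> nat) (S :: nat multiset).
        inj_on r {..<3} \<longrightarrow> r ` {..<3} \<subseteq> {..<d} \<longrightarrow>
        inj_on c {..<3} \<longrightarrow> c ` {..<3} \<subseteq> {..<d} \<longrightarrow>
        size S = 3 \<longrightarrow> set_mset S \<subseteq> {..<d} \<longrightarrow>
        (\<forall>x \<in> attention_variety a d t.
           (\<Sum>ts\<in>permutations_of_multiset S.
              det (mat 3 3 (\<lambda>(p, q). Tt x n j (r p) (c q) (ts ! p)))) = 0))"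
proof (intro conjI allI impI ballI)
  fix W :: "(nat \<Rightarrow> nat \<Rightarrow> real) \<times> (nat \<Rightarrow> nat \<Rightarrow> real) \<times> (nat \<Rightarrow> real)" and k3 n1 n2
  assume k3: "k3 < d" and n1: "n1 < t" "n1 \<noteq> j" and n2: "n2 < t" "n2 \<noteq> j"
  obtain Q K V where W: "W = (Q, K, V)"
    by (cases W rule: prod_cases3)
  show "Mslice d (mu a d t W) n1 j k3 = Mslice d (mu a d t W) n2 j k3"
    unfolding W Mslice_mu[OF n1(1) \<open>j < t\<close> n1(2) k3] Mslice_mu[OF n2(1) \<open>j < t\<close> n2(2) k3] ..
next
  fix W :: "(nat \<Rightarrow> nat \<Rightarrow> real) \<times> (nat \<Rightarrow> nat \<Rightarrow> real) \<times> (nat \<Rightarrow> real)" and lam :: "nat \<Rightarrow> real"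
  obtain Q K V where W: "W = (Q, K, V)"
    by (cases W rule: prod_cases3)
  show "vec_space.rank d (Mlam d (mu a d t W) n j lam) \<le> 2"
    unfolding W by (rule rank_Mlam_mu_le_2[OF assms(2-4)])
next
  fix r c :: "nat \<Rightarrow> nat" and S x
  assume rcS: "r ` {..<3} \<subseteq> {..<d}" "c ` {..<3} \<subseteq> {..<d}" "size S = 3" "set_mset S \<subseteq> {..<d}"
    and x: "x \<in> attention_variety a d t"
  have "Delta x n j r c S = 0"
  proof (rule vanishes_on_attention_variety[OF polyfun_Delta _ x])
    fix Q K V
    show "Delta (mu a d t (Q, K, V)) n j r c S = 0"
      using assms(2-4) rcS by (rule Delta_mu_eq_0)
  qed
  then show "(\<Sum>ts\<in>permutations_of_multiset S. det (mat 3 3 (\<lambda>(p, q). Tt x n j (r p) (c q) (ts ! p)))) = 0"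
    unfolding Delta_def .
qed

end
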